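(* Let $d\ge2$ and let $K\subset\mathbb{T}$ be a closed set with $E_d(K)=K$ having the non-wandering property. Let $y\in K$ be a regular critical value, with neighborhood $U$ and maps $\eta_-(x)=\frac{x}{d}+\frac{j_1}{d}$ on the left component $B_-$ of $U\setminus\{y\}$ and $\eta_+(x)=\frac{x}{d}+\frac{j_2}{d}$ on the right component $B_+$ (with $j_1,j_2\in\{0,\dots,d-1\}$) as in the definition of regularity. Then $j_1\ne j_2$, and every point of $E_d^{-1}(y)\cap K$ is equal to $\frac{y}{d}+\frac{j_1}{d}$ or to $\frac{y}{d}+\frac{j_2}{d}$; in particular $\#(E_d^{-1}(y)\cap K)=2$.
   Context: $\mathbb{T}=\mathbb{R}/\mathbb{Z}$, $E_d(x)=dx\bmod 1$. A point $x\in K$ is a critical value if $\#(E_d^{-1}(x)\cap K)>1$. A critical value $x$ is regular if there is a connected open neighborhood $U$ of $x$ such that for each of the two components $B$ of $U\setminus\{x\}$ there is a continuous $\eta_B:B\to\mathbb{T}$ with $E_d\circ\eta_B=\mathrm{id}_B$ and, for every $z\in B\cap K$, $\eta_B(z)$ is the unique point of $E_d^{-1}(z)\cap K$. $K$ has the non-wandering property if for all $x\in K$ and $\varepsilon>0$ there exist $y\in K$ and $n>0$ with $d(x,y)<\varepsilon$ and $d(x,E_d^n(y))<\varepsilon$. *)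

theory Defs
  imports "HOL-Analysis.Analysis"
begin

text \<open>The circle T = R/Z is modelled through lifts: a point of T is represented by any
real number, two reals representing the same point iff their difference is an integer.
A subset K of T is represented by its full preimage in R, a 1-periodic set.
E_d(x) = d x mod 1 is represented by multiplication by d.\<close>

definition periodic_set :: "real set \<Rightarrow> bool" where
  "periodic_set K \<longleftrightarrow> (\<forall>x. x \<in> K \<longleftrightarrow> x + 1 \<in> K)"

definition circ_dist :: "real \<Rightarrow> real \<Rightarrow> real" where
  "circ_dist x y = min (frac (x - y)) (1 - frac (x - y))"

definition Ed_invariant :: "nat \<Rightarrow> real set \<Rightarrow> bool" where
  "Ed_invariant d K \<longleftrightarrow>
     (\<forall>x\<in>K. real d * x \<in> K) \<and> (\<forall>y\<in>K. \<exists>x\<in>K. real d * x - y \<in> \<int>)"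

text \<open>The points of E_d^{-1}(y) \<inter> K, each represented by its unique lift in [0,1).\<close>
definition preimage_pts :: "nat \<Rightarrow> real set \<Rightarrow> real \<Rightarrow> real set" where
  "preimage_pts d K y = {frac z | z. z \<in> K \<and> real d * z - y \<in> \<int>}"

definition critical_value :: "nat \<Rightarrow> real set \<Rightarrow> real \<Rightarrow> bool" where
  "critical_value d K y \<longleftrightarrow> y \<in> K \<and> card (preimage_pts d K y) > 1"

definition nonwandering :: "nat \<Rightarrow> real set \<Rightarrow> bool" where
  "nonwandering d K \<longleftrightarrow>
     (\<forall>x\<in>K. \<forall>\<epsilon>>0. \<exists>y\<in>K. \<exists>n>0.
        circ_dist x y < \<epsilon> \<and> circ_dist x ((real d) ^ n * y) < \<epsilon>)"

end

theory Submission
  imports Defs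
begin

text \<open>Suppose a preimage z of y in K differs from both branch values y/d + j1/d and
y/d + j2/d. Every point of K close to z is mapped by E_d to a point of K close to y, and there
the preimage in K is unique and given by a branch, so z is an isolated point of K. The
non-wandering property makes an isolated point periodic; if E_d^n(z) = z then
E_d^(n-1)(y) = z, so isolation pulls back to y and then to every preimage of y. All these
preimages are then periodic, and two periodic points with the same image coincide, so y would
have only one preimage in K, contradicting that y is a critical value.\<close>

lemma frac_eq_iff_diff_Ints: "frac (a::real) = frac b \<longleftrightarrow> a - b \<in> \<int>"
proof
  assume "frac a = frac b"
  then have "a - b = of_int (\<lfloor>a\<rfloor> - \<lfloor>b\<rfloor>)" by (simp add: frac_def)
  then show "a - b \<in> \<int>" by simp
next
  assume "a - b \<in> \<int>"
  then have "frac (b + (a - b)) = frac b" by (rule frac_add_int_right)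
  then show "frac a = frac b" by simp
qed

lemma periodic_set_add_of_int_iff:
  assumes "periodic_set K" shows "x + of_int k \<in> K \<longleftrightarrow> x \<in> K"
proof (induction k rule: int_induct[where k = 0])
  case (step1 i)
  have "x + of_int (i + 1) = x + of_int i + 1" by simp
  then show ?case using step1 assms unfolding periodic_set_def by metis
next
  case (step2 i)
  have "x + of_int (i - 1) + 1 = x + of_int i" by simp
  then show ?case using step2 assms unfolding periodic_set_def by metis
qed simp

lemma periodic_set_Ints_diff:
  assumes "periodic_set K" "x \<in> K" "x' - x \<in> \<int>" shows "x' \<in> K"
proof -
  obtain k where "x' = x + of_int k" using assms(3) by (metis Ints_cases diff_add_cancel add.commute)
  then show ?thesis using periodic_set_add_of_int_iff[OF assms(1)] assms(2) by simp
qed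

lemma Ed_invariant_power_mem:
  assumes "Ed_invariant d K" "x \<in> K" shows "real d ^ n * x \<in> K"
proof (induction n)
  case (Suc n)
  then show ?case using assms(1) unfolding Ed_invariant_def by (simp add: mult.assoc)
qed (use assms in simp)

lemma circ_dist_less_imp_lift:
  assumes "circ_dist x y < e" shows "\<exists>k::int. \<bar>y + of_int k - x\<bar> < e"
proof (cases "frac (x - y) < e")
  case True
  have "y + of_int \<lfloor>x - y\<rfloor> - x = - frac (x - y)" by (simp add: frac_def)
  then have "\<bar>y + of_int \<lfloor>x - y\<rfloor> - x\<bar> = frac (x - y)" by simp
  then show ?thesis using True by metis
next
  case False
  then have "1 - frac (x - y) < e" using assms unfolding circ_dist_def by linarith
  moreover have "\<bar>y + of_int (\<lfloor>x - y\<rfloor> + 1) - x\<bar> = 1 - frac (x - y)"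
    using frac_lt_1[of "x - y"] by (simp add: frac_def)
  ultimately show ?thesis by metis
qed

definition Ed_periodic :: "nat \<Rightarrow> real \<Rightarrow> bool" where
  "Ed_periodic d z \<longleftrightarrow> (\<exists>n>0. real d ^ n * z - z \<in> \<int>)"

lemma power_mult_periodic:
  assumes "real d ^ n * z - z \<in> \<int>" shows "real d ^ (n * k) * z - z \<in> \<int>"
proof (induction k)
  case (Suc k)
  have "real d ^ (n * Suc k) * z - z = real d ^ n * (real d ^ (n * k) * z - z) + (real d ^ n * z - z)"
    by (simp add: power_add algebra_simps)
  also have "\<dots> \<in> \<int>" using Suc assms by (intro Ints_add Ints_mult) auto
  finally show ?case .
qed simp

lemma Ed_periodic_same_image:
  assumes "Ed_periodic d z" "Ed_periodic d z'" "real d * z - real d * z' \<in> \<int>"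
  shows "z - z' \<in> \<int>"
proof -
  obtain n n' where "n > 0" "n' > 0" and n: "real d ^ n * z - z \<in> \<int>"
    and n': "real d ^ n' * z' - z' \<in> \<int>"
    using assms(1,2) unfolding Ed_periodic_def by blast
  define N where "N = n * n'"
  have "N > 0" using \<open>n > 0\<close> \<open>n' > 0\<close> by (simp add: N_def)
  have "real d ^ N * z - z \<in> \<int>" unfolding N_def by (rule power_mult_periodic[OF n])
  moreover have "real d ^ N * z' - z' \<in> \<int>" unfolding N_def
    by (subst mult.commute) (rule power_mult_periodic[OF n'])
  moreover have "real d ^ N * z - real d ^ N * z' \<in> \<int>"
  proof -
    have "real d ^ N * z - real d ^ N * z' = real d ^ (N - 1) * (real d * z - real d * z')"
      using \<open>N > 0\<close> by (simp add: algebra_simps flip: power_Suc)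
    then show ?thesis using assms(3) by (simp add: Ints_mult)
  qed
  moreover have "z - z' = (real d ^ N * z' - z') - (real d ^ N * z - z) + (real d ^ N * z - real d ^ N * z')"
    by simp
  ultimately show ?thesis by (metis Ints_add Ints_diff)
qed

lemma isolated_in_nonwandering_imp_Ed_periodic:
  assumes "periodic_set K" "Ed_invariant d K" "nonwandering d K" "p isolated_in K"
  shows "Ed_periodic d p"
proof -
  obtain \<delta> where "\<delta> > 0" and iso: "\<And>w. w \<in> K \<Longrightarrow> \<bar>w - p\<bar> < \<delta> \<Longrightarrow> w = p"
    using assms(4) by (auto simp: isolated_in_dist_Ex_iff dist_real_def abs_minus_commute)
  have "p \<in> K" using assms(4) by (simp add: isolated_in_dist_Ex_iff)
  then obtain w n where w: "w \<in> K" "n > 0" "circ_dist p w < \<delta>" "circ_dist p (real d ^ n * w) < \<delta>"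
    using assms(3) \<open>\<delta> > 0\<close> unfolding nonwandering_def by blast
  obtain k where k: "\<bar>w + of_int k - p\<bar> < \<delta>" using circ_dist_less_imp_lift[OF w(3)] by blast
  obtain k' where k': "\<bar>real d ^ n * w + of_int k' - p\<bar> < \<delta>"
    using circ_dist_less_imp_lift[OF w(4)] by blast
  have "w + of_int k = p"
    using iso k w(1) periodic_set_add_of_int_iff[OF assms(1)] by blast
  moreover have "real d ^ n * w + of_int k' = p"
    using iso k' Ed_invariant_power_mem[OF assms(2) w(1)] periodic_set_add_of_int_iff[OF assms(1)]
    by blast
  ultimately have "real d ^ n * p - p = real d ^ n * of_int k - of_int k'"
    by (auto simp: algebra_simps)
  also have "\<dots> \<in> \<int>" by (intro Ints_diff Ints_mult) auto
  finally show ?thesis using w(2) unfolding Ed_periodic_def by blast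
qed

text \<open>Multiplication by d^k expands distances by d^k, so E_d^k maps a small enough
neighbourhood of q into the neighbourhood of p that meets K only in p.\<close>

lemma isolated_in_pullback:
  assumes "d \<ge> 1" "periodic_set K" "Ed_invariant d K" "p isolated_in K" "q \<in> K"
    and "real d ^ k * q - p \<in> \<int>"
  shows "q isolated_in K"
proof -
  obtain \<delta> where "\<delta> > 0" and iso: "\<And>w. w \<in> K \<Longrightarrow> \<bar>w - p\<bar> < \<delta> \<Longrightarrow> w = p"
    using assms(4) by (auto simp: isolated_in_dist_Ex_iff dist_real_def abs_minus_commute)
  define D where "D = real d ^ k"
  have "D > 0" using assms(1) by (simp add: D_def)
  have "w = q" if "w \<in> K" "\<bar>w - q\<bar> < \<delta> / D" for w
  proof -
    define t where "t = D * w - (D * q - p)"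
    have "t - D * w = - (real d ^ k * q - p)" by (simp add: t_def D_def)
    then have "t - D * w \<in> \<int>" using assms(6) by (metis Ints_minus)
    then have "t \<in> K"
      using periodic_set_Ints_diff[OF assms(2) Ed_invariant_power_mem[OF assms(3) \<open>w \<in> K\<close>]]
      by (simp add: D_def)
    moreover have "\<bar>t - p\<bar> < \<delta>"
    proof -
      have "t - p = D * (w - q)" by (simp add: t_def algebra_simps)
      then have "\<bar>t - p\<bar> = D * \<bar>w - q\<bar>" using \<open>D > 0\<close> by (simp add: abs_mult)
      also have "\<dots> < \<delta>" using that(2) \<open>D > 0\<close> by (simp add: field_simps)
      finally show ?thesis .
    qed
    ultimately have "t = p" by (rule iso)
    then show "w = q" using \<open>D > 0\<close> by (simp add: t_def)
  qed
  then show ?thesis using assms(5) \<open>\<delta> > 0\<close> \<open>D > 0\<close>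
    by (auto simp: isolated_in_dist_Ex_iff dist_real_def abs_minus_commute intro!: exI[of _ "\<delta> / D"])
qed

lemma card_preimage_pts_le_1_if_isolated_preimage:
  assumes "d \<ge> 1" "periodic_set K" "Ed_invariant d K" "nonwandering d K"
    and "z isolated_in K" "real d * z - y \<in> \<int>"
  shows "card (preimage_pts d K y) \<le> 1"
proof -
  have periodic: "Ed_periodic d w" if "w isolated_in K" for w
    using isolated_in_nonwandering_imp_Ed_periodic[OF assms(2-4) that] .
  obtain n where "n > 0" and n: "real d ^ n * z - z \<in> \<int>"
    using periodic[OF assms(5)] unfolding Ed_periodic_def by blast
  have "z \<in> K" using assms(5) by (simp add: isolated_in_dist_Ex_iff)
  have "y \<in> K"
    using periodic_set_Ints_diff[OF assms(2) Ed_invariant_power_mem[OF assms(3) \<open>z \<in> K\<close>, of 1]]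
      Ints_minus[OF assms(6)] by simp
  have "real d ^ (n - 1) * y - z = (real d ^ n * z - z) - real d ^ (n - 1) * (real d * z - y)"
    using \<open>n > 0\<close> by (simp add: algebra_simps flip: power_Suc)
  also have "\<dots> \<in> \<int>" by (intro Ints_diff[OF n] Ints_mult[OF _ assms(6)]) simp
  finally have "y isolated_in K" using isolated_in_pullback[OF assms(1-3,5) \<open>y \<in> K\<close>] by blast
  have "preimage_pts d K y \<subseteq> {frac z}"
  proof
    fix u assume "u \<in> preimage_pts d K y"
    then obtain z' where z': "u = frac z'" "z' \<in> K" "real d * z' - y \<in> \<int>"
      unfolding preimage_pts_def by blast
    have "z' isolated_in K"
      using isolated_in_pullback[OF assms(1-3) \<open>y isolated_in K\<close> z'(2), of 1] z'(3) by simp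
    moreover have "real d * z - real d * z' \<in> \<int>"
      using Ints_diff[OF assms(6) z'(3)] by simp
    ultimately have "z - z' \<in> \<int>"
      using Ed_periodic_same_image periodic assms(5) by blast
    then show "u \<in> {frac z}" using z'(1) frac_eq_iff_diff_Ints[of z z'] by simp
  qed
  then show ?thesis using card_mono[of "{frac z}"] by fastforce
qed

lemma preimage_isolated_in_off_branches:
  fixes j1 j2 :: nat
  assumes "d \<ge> 1" "periodic_set K" "Ed_invariant d K" "0 < a" "0 < b"
    and left: "\<forall>x\<in>{y - a<..<y} \<inter> K. preimage_pts d K x = {frac (x / real d + real j1 / real d)}"
    and right: "\<forall>x\<in>{y<..<y + b} \<inter> K. preimage_pts d K x = {frac (x / real d + real j2 / real d)}"
    and "z \<in> K" "real d * z - y \<in> \<int>"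
    and off: "frac z \<notin> {frac (y / real d + real j1 / real d), frac (y / real d + real j2 / real d)}"
  shows "z isolated_in K"
proof -
  define D where "D = real d"
  have "D > 0" using assms(1) by (simp add: D_def)
  define m where "m = D * z - y"
  have "w = z" if "w \<in> K" "\<bar>w - z\<bar> < min a b / D" for w
  proof (rule ccontr)
    assume "w \<noteq> z"
    define x where "x = D * w - m"
    have "x - D * w = - (real d * z - y)" by (simp add: x_def m_def D_def)
    then have "x - D * w \<in> \<int>" using assms(9) by (metis Ints_minus)
    then have "x \<in> K"
      using periodic_set_Ints_diff[OF assms(2) Ed_invariant_power_mem[OF assms(3) \<open>w \<in> K\<close>, of 1]]
      by (simp add: D_def)
    have xy: "x - y = D * (w - z)" by (simp add: x_def m_def algebra_simps)
    then have "\<bar>x - y\<bar> = D * \<bar>w - z\<bar>" using \<open>D > 0\<close> by (simp add: abs_mult)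
    also have "\<dots> < min a b" using that(2) \<open>D > 0\<close> by (simp add: field_simps)
    finally have "\<bar>x - y\<bar> < min a b" .
    moreover have "x \<noteq> y" using xy \<open>w \<noteq> z\<close> \<open>D > 0\<close> by auto
    ultimately obtain j where j: "j \<in> {j1, j2}" and
      fibre: "preimage_pts d K x = {frac (x / real d + real j / real d)}"
      using left right \<open>x \<in> K\<close> by (cases "x < y") auto
    have "frac w \<in> preimage_pts d K x"
      unfolding preimage_pts_def using \<open>w \<in> K\<close> assms(9) by (auto simp: x_def m_def D_def)
    then have "w - (x / real d + real j / real d) \<in> \<int>" using fibre frac_eq_iff_diff_Ints by simp
    moreover have "w - (x / real d + real j / real d) = z - (y / real d + real j / real d)"
      using \<open>D > 0\<close> by (simp add: x_def m_def D_def field_simps)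
    ultimately show False using off j frac_eq_iff_diff_Ints by auto
  qed
  then show ?thesis using \<open>z \<in> K\<close> \<open>D > 0\<close> assms(4,5)
    by (auto simp: isolated_in_dist_Ex_iff dist_real_def abs_minus_commute
        intro!: exI[of _ "min a b / D"])
qed

theorem lemma2:
  fixes d j1 j2 :: nat and K :: "real set" and y a b :: real
  assumes "d \<ge> 2"
    and "closed K" and "periodic_set K"
    and "Ed_invariant d K"
    and "nonwandering d K"
    and "critical_value d K y"
    and "0 < a" and "0 < b" and "a + b \<le> 1"
    and "j1 < d" and "j2 < d"
    and "\<forall>x\<in>{y - a<..<y} \<inter> K. preimage_pts d K x = {frac (x / real d + real j1 / real d)}"
    and "\<forall>x\<in>{y<..<y + b} \<inter> K. preimage_pts d K x = {frac (x / real d + real j2 / real d)}"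
  shows "j1 \<noteq> j2
    \<and> preimage_pts d K y \<subseteq> {frac (y / real d + real j1 / real d), frac (y / real d + real j2 / real d)}
    \<and> card (preimage_pts d K y) = 2"
proof -
  define P where "P = preimage_pts d K y"
  define c1 where "c1 = frac (y / real d + real j1 / real d)"
  define c2 where "c2 = frac (y / real d + real j2 / real d)"
  have "d \<ge> 1" using assms(1) by simp
  have "card P > 1" using assms(6) unfolding critical_value_def P_def by simp
  have sub: "P \<subseteq> {c1, c2}"
  proof
    fix u assume "u \<in> P"
    then obtain z where z: "u = frac z" "z \<in> K" "real d * z - y \<in> \<int>"
      unfolding P_def preimage_pts_def by blast
    show "u \<in> {c1, c2}"
    proof (rule ccontr)
      assume "u \<notin> {c1, c2}"
      then have "z isolated_in K"
        using preimage_isolated_in_off_branches[OF \<open>d \<ge> 1\<close> assms(3,4,7,8,12,13) z(2,3)] z(1)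
        unfolding c1_def c2_def by blast
      then have "card P \<le> 1"
        using card_preimage_pts_le_1_if_isolated_preimage[OF \<open>d \<ge> 1\<close> assms(3-5) _ z(3)]
        unfolding P_def by blast
      then show False using \<open>card P > 1\<close> by simp
    qed
  qed
  have "c1 \<noteq> c2" using sub \<open>card P > 1\<close> card_mono[of "{c1}" P] by auto
  then have "card P = 2" using sub \<open>card P > 1\<close> card_mono[of "{c1, c2}" P] by auto
  moreover have "j1 \<noteq> j2" using \<open>c1 \<noteq> c2\<close> unfolding c1_def c2_def by auto
  ultimately show ?thesis using sub unfolding P_def c1_def c2_def by blast
qed

end
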